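(* Let $n\ge 2$ and fix positive integers $d_1,\dots,d_n$. Consider minimizing $(f_n-f_1)^2$ over real vectors $(f_1,\dots,f_n)$ subject to \[ \sum_{i=1}^n f_i d_i=0,\qquad \sum_{i=1}^n f_i^2 d_i=1, \] and $f_1\le f_k\le f_n$ for all $k$. If $(f_1,\dots,f_n)$ is a minimizer, then for every $k$ one has $f_k=f_1$ or $f_k=f_n$. *)

theory Defs
  imports Complex_Main
begin

text \<open>Vectors (f_1,...,f_n) are represented as functions nat => real, only the
values on {1..n} matter. Weights d_1..d_n are positive integers.\<close>

definition feasible :: "nat \<Rightarrow> (nat \<Rightarrow> nat) \<Rightarrow> (nat \<Rightarrow> real) \<Rightarrow> bool" where
  "feasible n d f \<longleftrightarrow>
     (\<Sum>i=1..n. f i * real (d i)) = 0 \<and>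
     (\<Sum>i=1..n. (f i)^2 * real (d i)) = 1 \<and>
     (\<forall>k\<in>{1..n}. f 1 \<le> f k \<and> f k \<le> f n)"

definition is_minimizer :: "nat \<Rightarrow> (nat \<Rightarrow> nat) \<Rightarrow> (nat \<Rightarrow> real) \<Rightarrow> bool" where
  "is_minimizer n d f \<longleftrightarrow>
     feasible n d f \<and>
     (\<forall>g. feasible n d g \<longrightarrow> (f n - f 1)^2 \<le> (g n - g 1)^2)"

end

theory Submission
  imports Defs
begin

text \<open>If some \<open>f k\<close> lay strictly between \<open>f 1\<close> and \<open>f n\<close>, move it a little up or down
  inside that interval. As a function of the new value the weighted variance is a quadratic
  with leading coefficient \<open>d k (1 - d k / \<Sum>d) > 0\<close>, so one of the two moves raises the
  variance above \<open>1\<close>. Centring and rescaling the perturbed vector to variance \<open>1\<close> then gives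
  a feasible vector whose range is shrunk by the factor \<open>1 / sqrt variance < 1\<close>,
  contradicting minimality.\<close>

definition wmean :: "'a set \<Rightarrow> ('a \<Rightarrow> real) \<Rightarrow> ('a \<Rightarrow> real) \<Rightarrow> real" where
  "wmean A w h = (\<Sum>i\<in>A. h i * w i) / sum w A"

definition wvar :: "'a set \<Rightarrow> ('a \<Rightarrow> real) \<Rightarrow> ('a \<Rightarrow> real) \<Rightarrow> real" where
  "wvar A w h = (\<Sum>i\<in>A. (h i)^2 * w i) - (\<Sum>i\<in>A. h i * w i)^2 / sum w A"

definition standardize :: "'a set \<Rightarrow> ('a \<Rightarrow> real) \<Rightarrow> ('a \<Rightarrow> real) \<Rightarrow> 'a \<Rightarrow> real" where
  "standardize A w h i = (h i - wmean A w h) / sqrt (wvar A w h)"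

lemma sum_fun_upd:
  fixes F :: "'b \<Rightarrow> 'a \<Rightarrow> 'c::ab_group_add"
  assumes "finite A" "k \<in> A"
  shows "(\<Sum>i\<in>A. F ((h(k := t)) i) i) = (\<Sum>i\<in>A. F (h i) i) + (F t k - F (h k) k)"
proof -
  have "(\<Sum>i\<in>A - {k}. F ((h(k := t)) i) i) = (\<Sum>i\<in>A - {k}. F (h i) i)"
    by (rule sum.cong) auto
  then show ?thesis
    using sum.remove[OF assms, of "\<lambda>i. F ((h(k := t)) i) i"]
      sum.remove[OF assms, of "\<lambda>i. F (h i) i"]
    by (simp add: algebra_simps)
qed

lemma sum_standardize:
  assumes "finite A" "sum w A > 0" "wvar A w h > 0"
  shows "(\<Sum>i\<in>A. standardize A w h i * w i) = 0"
proof -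
  have "(\<Sum>i\<in>A. standardize A w h i * w i)
      = ((\<Sum>i\<in>A. h i * w i) - wmean A w h * sum w A) / sqrt (wvar A w h)"
    by (simp add: standardize_def sum_subtractf sum_distrib_right algebra_simps
        flip: sum_divide_distrib)
  also have "wmean A w h * sum w A = (\<Sum>i\<in>A. h i * w i)"
    using assms(2) by (simp add: wmean_def)
  finally show ?thesis by simp
qed

lemma sum_square_standardize:
  assumes "finite A" "sum w A > 0" "wvar A w h > 0"
  shows "(\<Sum>i\<in>A. (standardize A w h i)^2 * w i) = 1"
proof -
  define L where "L = (\<Sum>i\<in>A. h i * w i)"
  define m where "m = wmean A w h"
  have "(\<Sum>i\<in>A. (standardize A w h i)^2 * w i)
      = (\<Sum>i\<in>A. (h i)^2 * w i - 2 * m * (h i * w i) + m^2 * w i) / wvar A w h"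
    using assms(3)
    by (simp add: standardize_def m_def sum_divide_distrib power_divide power2_diff
        algebra_simps)
  also have "\<dots> = ((\<Sum>i\<in>A. (h i)^2 * w i) - 2 * m * L + m^2 * sum w A) / wvar A w h"
    by (simp add: sum_subtractf sum.distrib sum_distrib_left L_def)
  also have "(\<Sum>i\<in>A. (h i)^2 * w i) - 2 * m * L + m^2 * sum w A = wvar A w h"
    using assms(2) by (simp add: wvar_def m_def wmean_def L_def field_simps power2_eq_square)
  finally show ?thesis using assms(3) by simp
qed

lemma standardize_mono:
  assumes "wvar A w h > 0" "h x \<le> h y"
  shows "standardize A w h x \<le> standardize A w h y"
  using assms by (simp add: standardize_def divide_right_mono)

lemma standardize_diff:
  "standardize A w h y - standardize A w h x = (h y - h x) / sqrt (wvar A w h)"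
  by (simp add: standardize_def diff_divide_distrib)

lemma wvar_fun_upd_plus_minus:
  assumes "finite A" "k \<in> A" "sum w A \<noteq> 0"
  shows "wvar A w (h(k := h k + e)) + wvar A w (h(k := h k - e))
       = 2 * wvar A w h + 2 * e^2 * w k * (1 - w k / sum w A)"
proof -
  have upd: "wvar A w (h(k := t)) = (\<Sum>i\<in>A. (h i)^2 * w i) + (t^2 - (h k)^2) * w k
      - ((\<Sum>i\<in>A. h i * w i) + (t - h k) * w k)^2 / sum w A" for t
    unfolding wvar_def
      sum_fun_upd[OF assms(1,2), of "\<lambda>x i. x^2 * w i" h t]
      sum_fun_upd[OF assms(1,2), of "\<lambda>x i. x * w i" h t]
    by (simp add: algebra_simps)
  show ?thesis
    unfolding upd using assms(3)
    by (simp add: wvar_def field_simps power2_eq_square)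
qed

lemma wvar_fun_upd_increase:
  assumes "finite A" "k \<in> A" "0 < w k" "w k < sum w A" "e \<noteq> 0"
  obtains t where "t = h k + e \<or> t = h k - e" "wvar A w (h(k := t)) > wvar A w h"
proof -
  have "2 * e^2 * w k * (1 - w k / sum w A) > 0"
    using assms(3-5) by (simp add: field_simps)
  moreover have "sum w A \<noteq> 0" using assms(3,4) by simp
  ultimately have "wvar A w (h(k := h k + e)) > wvar A w h
      \<or> wvar A w (h(k := h k - e)) > wvar A w h"
    using wvar_fun_upd_plus_minus[OF assms(1,2), of w h e] by linarith
  then show ?thesis using that by blast
qed

lemma feasible_wvar:
  assumes "feasible n d f"
  shows "wvar {1..n} (\<lambda>i. real (d i)) f = 1"
  using assms by (simp add: feasible_def wvar_def)

lemma feasible_standardize: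
  fixes h :: "nat \<Rightarrow> real" and d :: "nat \<Rightarrow> nat"
  defines "w \<equiv> \<lambda>i. real (d i)"
  assumes "sum w {1..n} > 0" "wvar {1..n} w h > 0"
    and "\<And>k. k \<in> {1..n} \<Longrightarrow> h 1 \<le> h k \<and> h k \<le> h n"
  shows "feasible n d (standardize {1..n} w h)"
  using assms sum_standardize[of "{1..n}" w h] sum_square_standardize[of "{1..n}" w h]
    standardize_mono[of "{1..n}" w h]
  unfolding feasible_def by simp

lemma member_less_sum:
  fixes w :: "'a \<Rightarrow> real"
  assumes "finite A" "k \<in> A" "j \<in> A" "j \<noteq> k" "\<And>i. i \<in> A \<Longrightarrow> w i \<ge> 0" "w j > 0"
  shows "w k < sum w A"
proof -
  have "w j \<le> sum w (A - {k})"
    using assms by (intro member_le_sum) auto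
  then show ?thesis
    using sum.remove[OF assms(1,2), of w] assms(6) by linarith
qed

lemma feasible_narrower:
  fixes f :: "nat \<Rightarrow> real"
  assumes "n \<ge> 2" "\<And>i. i \<in> {1..n} \<Longrightarrow> d i > 0" "feasible n d f"
    and "k \<in> {1..n}" "f 1 < f k" "f k < f n"
  obtains g where "feasible n d g" "(g n - g 1)^2 < (f n - f 1)^2"
proof -
  define w where "w i = real (d i)" for i
  have k1: "k \<noteq> 1" and kn: "k \<noteq> n" using assms(5,6) by auto
  have wk: "w k > 0" "w k < sum w {1..n}"
    using assms(1,2,4) k1 member_less_sum[of "{1..n}" k 1 w]
    by (auto simp: w_def less_imp_le)
  define e where "e = min (f k - f 1) (f n - f k)"
  have "e \<noteq> 0" using assms(5,6) by (simp add: e_def)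
  moreover have "wvar {1..n} w f = 1"
    using feasible_wvar[OF assms(3)] by (simp add: w_def[abs_def])
  ultimately obtain t where t: "t = f k + e \<or> t = f k - e"
    and var: "wvar {1..n} w (f(k := t)) > 1"
    using wvar_fun_upd_increase[of "{1..n}" k w e f] assms(4) wk by auto
  have "f 1 \<le> t" "t \<le> f n" using t assms(5,6) by (auto simp: e_def)
  define h where "h = f(k := t)"
  have ends: "h 1 = f 1" "h n = f n" using k1 kn unfolding h_def by auto
  have "feasible n d (standardize {1..n} w h)"
    unfolding w_def
  proof (rule feasible_standardize)
    show "sum (\<lambda>i. real (d i)) {1..n} > 0" using wk by (simp add: w_def)
    show "wvar {1..n} (\<lambda>i. real (d i)) h > 0" using var by (simp add: h_def w_def[abs_def])
    show "h 1 \<le> h j \<and> h j \<le> h n" if "j \<in> {1..n}" for j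
      using assms(3) that \<open>f 1 \<le> t\<close> \<open>t \<le> f n\<close> ends
      unfolding h_def feasible_def by auto
  qed
  moreover have "((f n - f 1) / sqrt (wvar {1..n} w h))^2 < (f n - f 1)^2"
  proof -
    have "(f n - f 1)^2 > 0" using assms(5,6) by simp
    then show ?thesis
      using var by (simp add: h_def power_divide divide_less_eq)
  qed
  ultimately show ?thesis
    using that standardize_diff[of "{1..n}" w h n 1] ends by simp
qed

theorem proposition2p1:
  fixes n :: nat and d :: "nat \<Rightarrow> nat" and f :: "nat \<Rightarrow> real"
  assumes "n \<ge> 2"
    and "\<And>i. i \<in> {1..n} \<Longrightarrow> d i > 0"
    and "is_minimizer n d f"
  shows "\<forall>k\<in>{1..n}. f k = f 1 \<or> f k = f n"
proof (rule ccontr)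
  assume "\<not> ?thesis"
  then obtain k where k: "k \<in> {1..n}" "f k \<noteq> f 1" "f k \<noteq> f n" by blast
  have feas: "feasible n d f"
    and min: "\<And>g. feasible n d g \<Longrightarrow> (f n - f 1)^2 \<le> (g n - g 1)^2"
    using assms(3) unfolding is_minimizer_def by auto
  have "f 1 < f k" "f k < f n"
    using feas k unfolding feasible_def by force+
  then obtain g where "feasible n d g" "(g n - g 1)^2 < (f n - f 1)^2"
    using feasible_narrower[OF assms(1,2) feas k(1)] by blast
  with min show False by fastforce
qed

end
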